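(* Let $0<\alpha<1$ and $p,q>0$. If $R_{\alpha,p}(A,B)\le_\lambda\mathcal{A}_{\alpha,q}(A,B)$ holds for all positive definite $2\times2$ matrices $A,B$, then $\alpha(1-\alpha)p\le q$.
   Context: For positive definite $A,B$: $R_{\alpha,p}(A,B):=\bigl(A^{\frac{1-\alpha}{2}p}B^{\alpha p}A^{\frac{1-\alpha}{2}p}\bigr)^{1/p}$ and $\mathcal{A}_{\alpha,q}(A,B):=((1-\alpha)A^q+\alpha B^q)^{1/q}$. For positive semidefinite $n\times n$ matrices $X,Y$ with eigenvalues $\lambda_1(X)\ge\dots\ge\lambda_n(X)$ (with multiplicities), $X\le_\lambda Y$ means $\lambda_i(X)\le\lambda_i(Y)$ for each $i=1,\dots,n$. *)

theory Defs
  imports "HOL-Analysis.Analysis" "HOL-Library.Numeral_Type"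
begin

definition adjoint :: "complex^'n^'m \<Rightarrow> complex^'m^'n" where
  "adjoint A = (\<chi> i j. cnj (A $ j $ i))"

definition hermitian :: "complex^'n^'n \<Rightarrow> bool" where
  "hermitian A \<longleftrightarrow> adjoint A = A"

definition unitary :: "complex^'n^'n \<Rightarrow> bool" where
  "unitary U \<longleftrightarrow> adjoint U ** U = mat 1"

definition pos_def :: "complex^'n^'n \<Rightarrow> bool" where
  "pos_def A \<longleftrightarrow> hermitian A \<and>
     (\<forall>x::complex^'n. x \<noteq> 0 \<longrightarrow> 0 < Re (\<Sum>i\<in>UNIV. cnj (x $ i) * (A *v x) $ i))"

definition diagc :: "('n \<Rightarrow> real) \<Rightarrow> complex^'n^'n" where
  "diagc d = (\<chi> i j. if i = j then complex_of_real (d i) else 0)"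

text \<open>Real power A^t of a positive definite matrix via its spectral decomposition
  A = U diag(d) U^*, A^t = U diag(d^t) U^* (well defined, independent of the decomposition).\<close>
definition mat_rpow :: "complex^'n^'n \<Rightarrow> real \<Rightarrow> complex^'n^'n" where
  "mat_rpow A t = (SOME B. \<exists>U d. unitary U \<and> (\<forall>i. 0 < d i) \<and>
       A = U ** diagc d ** adjoint U \<and> B = U ** diagc (\<lambda>i. d i powr t) ** adjoint U)"

definition eigs :: "complex^('n::{finite,linorder})^('n::{finite,linorder}) \<Rightarrow> ('n::{finite,linorder} \<Rightarrow> real)" where
  "eigs X = (SOME d. (\<forall>i j. i \<le> j \<longrightarrow> d j \<le> d i) \<and>
       (\<exists>U. unitary U \<and> X = U ** diagc d ** adjoint U))"

definition le_lambda :: "complex^('n::{finite,linorder})^('n::{finite,linorder}) \<Rightarrow> complex^('n::{finite,linorder})^('n::{finite,linorder}) \<Rightarrow> bool" where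
  "le_lambda X Y \<longleftrightarrow> (\<forall>i::'n. eigs X i \<le> eigs Y i)"

definition R_mean :: "real \<Rightarrow> real \<Rightarrow> complex^'n^'n \<Rightarrow> complex^'n^'n \<Rightarrow> complex^'n^'n" where
  "R_mean \<alpha> p A B = mat_rpow
     (mat_rpow A ((1 - \<alpha>) / 2 * p) ** mat_rpow B (\<alpha> * p) ** mat_rpow A ((1 - \<alpha>) / 2 * p)) (1 / p)"

definition A_mean :: "real \<Rightarrow> real \<Rightarrow> complex^'n^'n \<Rightarrow> complex^'n^'n \<Rightarrow> complex^'n^'n" where
  "A_mean \<alpha> q A B = mat_rpow ((1 - \<alpha>) *\<^sub>R mat_rpow A q + \<alpha> *\<^sub>R mat_rpow B q) (1 / q)"

end

theory Submission
  imports Defs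
begin

text \<open>
  Test the hypothesis on \<open>A = diag(1, \<epsilon>)\<close> and on \<open>B\<close>, the rotation of \<open>A\<close> by the angle
  with cosine \<open>c = sqrt (1 - \<sigma>)\<close>. The largest
  eigenvalue of \<open>R\<^sub>\<alpha>\<^sub>,\<^sub>p(A, B)\<close> is at least the \<open>1/p\<close>-th power of the (1,1) entry of
  \<open>A\<^bsup>(1-\<alpha>)p/2\<^esup> B\<^bsup>\<alpha>p\<^esup> A\<^bsup>(1-\<alpha>)p/2\<^esup>\<close>, which is at least \<open>c\<^sup>2 = 1 - \<sigma>\<close>; the largest
  eigenvalue of the power mean is the \<open>1/q\<close>-th power of the larger root of the characteristic
  polynomial of \<open>(1 - \<alpha>) A\<^sup>q + \<alpha> B\<^sup>q\<close>. Letting \<open>\<epsilon> \<rightarrow> 0\<close>, so that \<open>A\<close> and \<open>B\<close> become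
  rank-one projections, gives for every \<open>\<sigma> \<in> (0, 1)\<close>
    \<open>(1 - \<sigma>)\<^bsup>1/p\<^esup> \<le> ((1 + sqrt (1 - 4\<alpha>(1 - \<alpha>)\<sigma>)) / 2)\<^bsup>1/q\<^esup> \<le> (1 - \<alpha>(1 - \<alpha>)\<sigma>)\<^bsup>1/q\<^esup>\<close>,
  and comparing the slopes of both sides at \<open>\<sigma> = 0\<close> yields \<open>\<alpha>(1 - \<alpha>)p \<le> q\<close>.
\<close>

section \<open>Explicit 2x2 complex matrices\<close>

text \<open>The library enumerates the type \<open>2\<close> as \<open>1, 2\<close> (with \<open>2 = 0\<close>); we use \<open>0 < 1\<close>,
  so that \<open>eigs X 0\<close> is the largest eigenvalue.\<close>

lemma exhaust_2_01: "(i::2) = 0 \<or> i = 1"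
proof -
  have "(2::2) = 0" by simp
  then show ?thesis using exhaust_2[of i] by metis
qed

lemma UNIV_2_01: "(UNIV::2 set) = {0, 1}"
  using exhaust_2_01 by auto

lemma sum_2_01: "sum f (UNIV::2 set) = f 0 + f 1"
  by (simp add: UNIV_2_01)

lemma forall_2_01: "(\<forall>i::2. P i) \<longleftrightarrow> P 0 \<and> P 1"
  using exhaust_2_01 by metis

lemma less_eq_2_01: "(i::2) \<le> j \<longleftrightarrow> i = j \<or> i = 0"
  using exhaust_2_01[of i] exhaust_2_01[of j]
  by (auto simp: less_eq_bit0_def bit0.Rep_0 bit0.Rep_1)

definition mk2 :: "complex \<Rightarrow> complex \<Rightarrow> complex \<Rightarrow> complex \<Rightarrow> complex^2^2" where
  "mk2 a b c d = (\<chi> i j. if i = 0 then (if j = 0 then a else b) else (if j = 0 then c else d))"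

lemma mk2_nth [simp]:
  "mk2 a b c d $ 0 $ 0 = a" "mk2 a b c d $ 0 $ 1 = b"
  "mk2 a b c d $ 1 $ 0 = c" "mk2 a b c d $ 1 $ 1 = d"
  by (simp_all add: mk2_def)

lemma mk2_entries: "M = mk2 (M$0$0) (M$0$1) (M$1$0) (M$1$1)"
  by (simp add: vec_eq_iff mk2_def forall_2_01)

lemma mk2_eq_iff [simp]:
  "mk2 a b c d = mk2 a' b' c' d' \<longleftrightarrow> a = a' \<and> b = b' \<and> c = c' \<and> d = d'"
  by (metis mk2_nth)

lemma mk2_mult [simp]:
  "mk2 a b c d ** mk2 e f g h = mk2 (a*e + b*g) (a*f + b*h) (c*e + d*g) (c*f + d*h)"
  by (subst mk2_entries) (simp add: matrix_matrix_mult_def sum_2_01)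

lemma mk2_add [simp]: "mk2 a b c d + mk2 a' b' c' d' = mk2 (a+a') (b+b') (c+c') (d+d')"
  by (subst mk2_entries) simp

lemma mk2_scaleR [simp]: "r *\<^sub>R mk2 a b c d = mk2 (r*a) (r*b) (r*c) (r*d)"
  by (subst mk2_entries) (simp add: vector_scaleR_component, simp add: scaleR_conv_of_real)

lemma mk2_mult_vec [simp]:
  "(mk2 a b c d *v x) $ 0 = a * x$0 + b * x$1"
  "(mk2 a b c d *v x) $ 1 = c * x$0 + d * x$1"
  by (simp_all add: matrix_vector_mult_def sum_2_01)

lemma adjoint_mk2 [simp]: "adjoint (mk2 a b c d) = mk2 (cnj a) (cnj c) (cnj b) (cnj d)"
  by (subst mk2_entries) (simp add: adjoint_def)

lemma diagc_eq_mk2: "diagc d = mk2 (d 0) 0 0 (d 1)"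
  by (subst mk2_entries) (simp add: diagc_def)

lemma mat_1_eq_mk2: "(mat 1 :: complex^2^2) = mk2 1 0 0 1"
  by (subst mk2_entries) (simp add: mat_def)

lemma unitary_mk2_iff:
  "unitary (mk2 a b c d) \<longleftrightarrow>
     cnj a * a + cnj c * c = 1 \<and> cnj a * b + cnj c * d = 0 \<and>
     cnj b * a + cnj d * c = 0 \<and> cnj b * b + cnj d * d = 1"
  by (simp add: unitary_def mat_1_eq_mk2)

lemma unitary_mult_adjoint: "unitary U \<Longrightarrow> U ** adjoint U = mat 1"
  using matrix_left_right_inverse unfolding unitary_def by blast

definition rotation2 :: "real \<Rightarrow> real \<Rightarrow> complex^2^2" where
  "rotation2 c s = mk2 (of_real c) (- of_real s) (of_real s) (of_real c)"

lemma unitary_rotation2: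
  assumes "c\<^sup>2 + s\<^sup>2 = 1" shows "unitary (rotation2 c s)"
proof -
  have "complex_of_real c * of_real c + of_real s * of_real s = 1"
    using arg_cong[OF assms, of complex_of_real] by (simp add: power2_eq_square)
  then show ?thesis
    unfolding rotation2_def unitary_mk2_iff by (simp add: algebra_simps)
qed

section \<open>Unitary diagonalisation, eigenvalues and real powers\<close>

lemma trace_det_unitary_conj:
  fixes U D :: "complex^'n^'n"
  assumes "unitary U"
  shows "trace (U ** D ** adjoint U) = trace D" and "det (U ** D ** adjoint U) = det D"
proof -
  have UU: "adjoint U ** U = mat 1"
    using assms unfolding unitary_def .
  show "trace (U ** D ** adjoint U) = trace D"
    using trace_mul_sym[of "U ** D" "adjoint U"] by (simp add: matrix_mul_assoc UU)
  have "det (adjoint U) * det U = 1"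
    using arg_cong[OF UU, of det] by (simp add: det_mul)
  then show "det (U ** D ** adjoint U) = det D"
    by (simp add: det_mul mult_ac)
qed

lemma trace_2_01: "trace (A::complex^2^2) = A$0$0 + A$1$1"
  by (simp add: trace_def sum_2_01)

lemma det_2_01: "det (A::complex^2^2) = A$0$0 * A$1$1 - A$0$1 * A$1$0"
proof -
  have two: "(2::2) = 0"
    by simp
  show ?thesis
    using det_2[of A] unfolding two by (simp add: mult.commute)
qed

lemma trace_det_diagc:
  "trace (diagc d :: complex^2^2) = of_real (d 0 + d 1)"
  "det (diagc d :: complex^2^2) = of_real (d 0 * d 1)"
  by (simp_all add: trace_2_01 det_2_01 diagc_eq_mk2)

lemma vieta_pair:
  fixes x y u v :: real
  assumes "x + y = u + v" and "x * y = u * v"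
  shows "(x = u \<and> y = v) \<or> (x = v \<and> y = u)"
proof -
  have "(x - u) * (x - v) = x * (x + y - u - v) + (u * v - x * y)"
    by (simp add: algebra_simps)
  then have "(x - u) * (x - v) = 0"
    using assms by simp
  then show ?thesis
    using assms(1) by auto
qed

lemma unitary_diag_eq_imp_swap:
  fixes U V :: "complex^2^2"
  assumes "unitary U" and "unitary V"
    and "U ** diagc d ** adjoint U = V ** diagc e ** adjoint V"
  shows "(e 0 = d 0 \<and> e 1 = d 1) \<or> (e 0 = d 1 \<and> e 1 = d 0)"
proof -
  have "complex_of_real (e 0 + e 1) = of_real (d 0 + d 1)"
    and "complex_of_real (e 0 * e 1) = of_real (d 0 * d 1)"
    using trace_det_unitary_conj[OF assms(1), of "diagc d"] trace_det_unitary_conj[OF assms(2), of "diagc e"]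
    by (simp_all add: assms(3) trace_det_diagc)
  then have "e 0 + e 1 = d 0 + d 1" and "e 0 * e 1 = d 0 * d 1"
    by (simp_all only: of_real_eq_iff)
  then show ?thesis
    by (rule vieta_pair)
qed

lemma unitary_diag_affine:
  fixes U :: "complex^2^2"
  assumes "unitary U"
  shows "U ** diagc (\<lambda>i. \<beta> * d i + \<gamma>) ** adjoint U
           = \<beta> *\<^sub>R (U ** diagc d ** adjoint U) + \<gamma> *\<^sub>R mat 1"
proof -
  have "U ** diagc (\<lambda>i. \<beta> * d i + \<gamma>) ** adjoint U
          = \<beta> *\<^sub>R (U ** diagc d ** adjoint U) + \<gamma> *\<^sub>R (U ** adjoint U)"
    by (subst (1 2 3 4 5 6) mk2_entries[of U]) (simp add: diagc_eq_mk2, algebra)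
  then show ?thesis
    using unitary_mult_adjoint[OF assms] by simp
qed

lemma line_through_two_points:
  fixes f :: "real \<Rightarrow> real"
  shows "\<exists>\<beta> \<gamma>. f x = \<beta> * x + \<gamma> \<and> f y = \<beta> * y + \<gamma>"
proof (cases "x = y")
  case True
  then show ?thesis by (intro exI[of _ 0] exI[of _ "f x"]) simp
next
  case False
  define \<beta> where "\<beta> = (f x - f y) / (x - y)"
  have "\<beta> * x - \<beta> * y = f x - f y"
    using False unfolding right_diff_distrib[symmetric] by (simp add: \<beta>_def)
  then have "f y = \<beta> * y + (f x - \<beta> * x)"
    by linarith
  then show ?thesis by (intro exI[of _ \<beta>] exI[of _ "f x - \<beta> * x"]) simp
qed

text \<open>On the two eigenvalues \<open>f\<close> agrees with an affine function, and affine functions of a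
  matrix do not depend on its diagonalisation.\<close>
lemma unitary_diag_fun_eq:
  fixes U V :: "complex^2^2"
  assumes U: "unitary U" and V: "unitary V"
    and eq: "U ** diagc d ** adjoint U = V ** diagc e ** adjoint V"
  shows "U ** diagc (\<lambda>i. f (d i)) ** adjoint U = V ** diagc (\<lambda>i. f (e i)) ** adjoint V"
proof -
  obtain \<beta> \<gamma> where line: "f (d 0) = \<beta> * d 0 + \<gamma>" "f (d 1) = \<beta> * d 1 + \<gamma>"
    using line_through_two_points by blast
  have "(\<lambda>i. f (d i)) = (\<lambda>i. \<beta> * d i + \<gamma>)" and "(\<lambda>i. f (e i)) = (\<lambda>i. \<beta> * e i + \<gamma>)"
    using line unitary_diag_eq_imp_swap[OF U V eq] by (auto simp: fun_eq_iff forall_2_01)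
  then show ?thesis
    by (simp add: unitary_diag_affine[OF U] unitary_diag_affine[OF V] eq)
qed

lemma mat_rpow_unitary_diag:
  fixes U :: "complex^2^2"
  assumes U: "unitary U" and pos: "\<forall>i. 0 < d i"
  shows "mat_rpow (U ** diagc d ** adjoint U) t = U ** diagc (\<lambda>i. d i powr t) ** adjoint U"
proof -
  let ?P = "\<lambda>B. \<exists>V e. unitary V \<and> (\<forall>i. 0 < e i) \<and> U ** diagc d ** adjoint U = V ** diagc e ** adjoint V
                 \<and> B = V ** diagc (\<lambda>i. e i powr t) ** adjoint V"
  have "?P (U ** diagc (\<lambda>i. d i powr t) ** adjoint U)"
    using U pos by (intro exI[of _ U] exI[of _ d]) simp
  then have "?P (mat_rpow (U ** diagc d ** adjoint U) t)"
    unfolding mat_rpow_def by (rule someI[of ?P])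
  then obtain V e where V: "unitary V" and eq: "U ** diagc d ** adjoint U = V ** diagc e ** adjoint V"
    and "mat_rpow (U ** diagc d ** adjoint U) t = V ** diagc (\<lambda>i. e i powr t) ** adjoint V"
    by blast
  with unitary_diag_fun_eq[OF U V eq, of "\<lambda>x. x powr t"] show ?thesis
    by simp
qed

lemma sorted_desc_2: "(\<forall>i j::2. i \<le> j \<longrightarrow> e j \<le> (e i :: real)) \<longleftrightarrow> e 1 \<le> e 0"
  by (simp add: forall_2_01 less_eq_2_01)

lemma eigs_unitary_diag:
  fixes U :: "complex^2^2"
  assumes U: "unitary U" and sorted: "d 1 \<le> d 0"
  shows "eigs (U ** diagc d ** adjoint U) = d"
proof -
  let ?P = "\<lambda>e. (\<forall>i j::2. i \<le> j \<longrightarrow> e j \<le> e i) \<and>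
                (\<exists>V. unitary V \<and> U ** diagc d ** adjoint U = V ** diagc e ** adjoint V)"
  have "?P d"
    using U sorted unfolding sorted_desc_2 by (intro conjI exI[of _ U]) simp_all
  then have "?P (eigs (U ** diagc d ** adjoint U))"
    unfolding eigs_def by (rule someI[of ?P])
  then obtain V where V: "unitary V"
    and eq: "U ** diagc d ** adjoint U = V ** diagc (eigs (U ** diagc d ** adjoint U)) ** adjoint V"
    and sorted': "eigs (U ** diagc d ** adjoint U) 1 \<le> eigs (U ** diagc d ** adjoint U) 0"
    unfolding sorted_desc_2 by blast
  from unitary_diag_eq_imp_swap[OF U V eq] sorted sorted'
  have "eigs (U ** diagc d ** adjoint U) 0 = d 0 \<and> eigs (U ** diagc d ** adjoint U) 1 = d 1"
    by (elim disjE) simp_all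
  then show ?thesis
    by (simp add: fun_eq_iff forall_2_01)
qed

lemma pos_def_unitary_diag:
  fixes U :: "complex^2^2"
  assumes U: "unitary U" and pos: "\<forall>i. 0 < d i"
  shows "pos_def (U ** diagc d ** adjoint U)"
  unfolding pos_def_def
proof (intro conjI allI impI)
  obtain a b c e where Ue: "U = mk2 a b c e" by (metis mk2_entries)
  show "hermitian (U ** diagc d ** adjoint U)"
    unfolding hermitian_def Ue diagc_eq_mk2 by (simp add: mult_ac)
  fix x :: "complex^2"
  assume "x \<noteq> 0"
  define y where "y = adjoint U *v x"
  have "x = U *v y"
    by (simp add: y_def matrix_vector_mul_assoc unitary_mult_adjoint[OF U])
  then have "y \<noteq> 0"
    using \<open>x \<noteq> 0\<close> by auto
  then have "y $ 0 \<noteq> 0 \<or> y $ 1 \<noteq> 0"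
    by (auto simp: vec_eq_iff forall_2_01)
  then have "0 < d 0 * (cmod (y $ 0))\<^sup>2 \<or> 0 < d 1 * (cmod (y $ 1))\<^sup>2"
    using pos by (metis mult_pos_pos zero_less_norm_iff zero_less_power)
  moreover have "0 \<le> d i * (cmod (y $ i))\<^sup>2" for i
    using pos by (simp add: less_imp_le)
  ultimately have "0 < d 0 * (cmod (y $ 0))\<^sup>2 + d 1 * (cmod (y $ 1))\<^sup>2"
    by (metis add_nonneg_pos add_pos_nonneg)
  moreover have "(\<Sum>i\<in>UNIV. cnj (x $ i) * ((U ** diagc d ** adjoint U) *v x) $ i)
      = of_real (d 0 * (cmod (y $ 0))\<^sup>2 + d 1 * (cmod (y $ 1))\<^sup>2)"
  proof -
    have y: "y $ 0 = cnj a * x $ 0 + cnj c * x $ 1" "y $ 1 = cnj b * x $ 0 + cnj e * x $ 1"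
      by (simp_all add: y_def Ue)
    have "(\<Sum>i\<in>UNIV. cnj (x $ i) * ((U ** diagc d ** adjoint U) *v x) $ i)
        = d 0 * (y $ 0 * cnj (y $ 0)) + d 1 * (y $ 1 * cnj (y $ 1))"
      unfolding y Ue diagc_eq_mk2 by (simp add: sum_2_01) algebra
    also have "\<dots> = of_real (d 0 * (cmod (y $ 0))\<^sup>2 + d 1 * (cmod (y $ 1))\<^sup>2)"
      by (simp only: of_real_add of_real_mult complex_norm_square)
    finally show ?thesis .
  qed
  ultimately show "0 < Re (\<Sum>i\<in>UNIV. cnj (x $ i) * ((U ** diagc d ** adjoint U) *v x) $ i)"
    by simp
qed

definition real_sym2 :: "real \<Rightarrow> real \<Rightarrow> real \<Rightarrow> complex^2^2" where
  "real_sym2 x y z = mk2 (of_real x) (of_real y) (of_real y) (of_real z)"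

definition max_eig2 :: "real \<Rightarrow> real \<Rightarrow> real \<Rightarrow> real" where
  "max_eig2 x y z = (x + z + sqrt ((x - z)\<^sup>2 + 4 * y\<^sup>2)) / 2"

lemma max_eig2_ge: "x \<le> max_eig2 x y z"
proof -
  have "\<bar>x - z\<bar> \<le> sqrt ((x - z)\<^sup>2 + 4 * y\<^sup>2)"
    using real_sqrt_le_mono[of "(x - z)\<^sup>2" "(x - z)\<^sup>2 + 4 * y\<^sup>2"] by simp
  then have "x - z \<le> sqrt ((x - z)\<^sup>2 + 4 * y\<^sup>2)"
    using abs_ge_self order_trans by blast
  then show ?thesis
    unfolding max_eig2_def by (simp add: field_simps)
qed

lemma max_eig2_trace_one_le:
  assumes "x + z = 1" and "x * z - y\<^sup>2 \<le> 1 / 2"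
  shows "max_eig2 x y z \<le> 1 - (x * z - y\<^sup>2)"
proof -
  define D where "D = x * z - y\<^sup>2"
  have "(x - z)\<^sup>2 + 4 * y\<^sup>2 = (x + z)\<^sup>2 - 4 * D"
    unfolding D_def by (simp add: power2_eq_square algebra_simps)
  also have "\<dots> \<le> (1 - 2 * D)\<^sup>2"
    using assms(1) by (simp add: power2_eq_square algebra_simps)
  finally have "sqrt ((x - z)\<^sup>2 + 4 * y\<^sup>2) \<le> 1 - 2 * D"
    using assms(2) unfolding D_def[symmetric] by (simp add: real_sqrt_le_iff')
  then show ?thesis
    using assms(1) unfolding max_eig2_def D_def by simp
qed

lemma real_sym2_rotation:
  assumes "c\<^sup>2 + s\<^sup>2 = 1" and "c\<^sup>2 * l1 + s\<^sup>2 * l2 = x" and "c * s * (l1 - l2) = y"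
    and "s\<^sup>2 * l1 + c\<^sup>2 * l2 = z"
  shows "real_sym2 x y z = rotation2 c s ** diagc (\<lambda>i. if i = 0 then l1 else l2) ** adjoint (rotation2 c s)"
proof -
  have entries: "x = c * l1 * c + s * l2 * s" "y = c * l1 * s - s * l2 * c" "z = s * l1 * s + c * l2 * c"
    using assms(2-4) by (simp_all add: power2_eq_square algebra_simps)
  show ?thesis
    unfolding real_sym2_def rotation2_def diagc_eq_mk2 entries by (simp add: algebra_simps)
qed

text \<open>The rotation is by the angle of the eigenvector \<open>(y, l1 - x)\<close> of the larger
  eigenvalue \<open>l1\<close>.\<close>
lemma real_sym2_rotation_parameters:
  fixes x y z :: real
  obtains c s l1 l2 where "c\<^sup>2 + s\<^sup>2 = 1" and "c\<^sup>2 * l1 + s\<^sup>2 * l2 = x"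
    and "c * s * (l1 - l2) = y" and "s\<^sup>2 * l1 + c\<^sup>2 * l2 = z" and "l2 \<le> l1"
proof (cases "y = 0")
  case True
  show ?thesis
  proof (cases "z \<le> x")
    case True
    with \<open>y = 0\<close> show ?thesis by (intro that[of 1 0 x z]) simp_all
  next
    case False
    with \<open>y = 0\<close> show ?thesis by (intro that[of 0 1 z x]) simp_all
  qed
next
  case False
  define r where "r = sqrt ((x - z)\<^sup>2 + 4 * y\<^sup>2)"
  define l1 where "l1 = (x + z + r) / 2"
  define l2 where "l2 = (x + z - r) / 2"
  define w where "w = l1 - x"
  define n where "n = sqrt (y\<^sup>2 + w\<^sup>2)"
  have "r\<^sup>2 = (x - z)\<^sup>2 + 4 * y\<^sup>2"
    unfolding r_def by simp
  then have prod: "l1 * l2 = x * z - y\<^sup>2"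
    unfolding l1_def l2_def by (simp add: power2_eq_square field_simps)
  have sum: "l1 + l2 = x + z"
    unfolding l1_def l2_def by (simp add: field_simps)
  have "w * (x - l2) = - (x * x - (l1 + l2) * x + l1 * l2)"
    unfolding w_def by (simp add: algebra_simps)
  then have key: "w * (x - l2) = y\<^sup>2"
    unfolding sum prod by (simp add: algebra_simps)
  have n2: "n\<^sup>2 = y\<^sup>2 + w\<^sup>2" and "0 < n\<^sup>2"
    using False by (simp_all add: n_def add_pos_nonneg)
  define c where "c = y / n"
  define s where "s = w / n"
  show ?thesis
  proof (rule that[of c s l1 l2])
    have "c\<^sup>2 + s\<^sup>2 = (y\<^sup>2 + w\<^sup>2) / n\<^sup>2"
      unfolding c_def s_def by (simp add: power_divide add_divide_distrib)
    then show cs: "c\<^sup>2 + s\<^sup>2 = 1"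
      using False unfolding n2 by simp
    have "y\<^sup>2 * l1 + w\<^sup>2 * l2 = x * n\<^sup>2 + w * (y\<^sup>2 - w * (x - l2))"
      unfolding n2 w_def by (simp add: power2_eq_square algebra_simps)
    then show x: "c\<^sup>2 * l1 + s\<^sup>2 * l2 = x"
      using \<open>0 < n\<^sup>2\<close> unfolding c_def s_def key by (simp add: power_divide field_simps)
    have "w * (l1 - l2) = n\<^sup>2"
      using key unfolding n2 w_def by (simp add: power2_eq_square algebra_simps)
    moreover have "c * s * (l1 - l2) = y * (w * (l1 - l2)) / n\<^sup>2"
      unfolding c_def s_def by (simp add: power2_eq_square)
    ultimately show "c * s * (l1 - l2) = y"
      using \<open>0 < n\<^sup>2\<close> by simp
    have "(c\<^sup>2 + s\<^sup>2) * (l1 + l2) = x + z"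
      unfolding cs sum by simp
    then show "s\<^sup>2 * l1 + c\<^sup>2 * l2 = z"
      using x by (simp add: algebra_simps)
    show "l2 \<le> l1"
      unfolding l1_def l2_def r_def by simp
  qed
qed

lemma real_sym2_diagonalization:
  obtains U d where "unitary U" and "d 1 \<le> d 0" and "real_sym2 x y z = U ** diagc d ** adjoint U"
proof -
  obtain c s l1 l2 where "c\<^sup>2 + s\<^sup>2 = 1" and "c\<^sup>2 * l1 + s\<^sup>2 * l2 = x"
    and "c * s * (l1 - l2) = y" and "s\<^sup>2 * l1 + c\<^sup>2 * l2 = z" and "l2 \<le> l1"
    by (rule real_sym2_rotation_parameters)
  then show thesis
    using that[of "rotation2 c s" "\<lambda>i. if i = 0 then l1 else l2"]
    by (simp add: unitary_rotation2 real_sym2_rotation)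
qed

lemma real_sym2_eigenvalues:
  assumes U: "unitary U" and sorted: "d 1 \<le> d 0"
    and eq: "real_sym2 x y z = U ** diagc d ** adjoint U"
  shows "d 0 + d 1 = x + z" and "d 0 * d 1 = x * z - y\<^sup>2" and "d 0 = max_eig2 x y z"
proof -
  have "complex_of_real (d 0 + d 1) = of_real (x + z)"
    and "complex_of_real (d 0 * d 1) = of_real (x * z - y\<^sup>2)"
    using trace_det_unitary_conj[OF U, of "diagc d"] unfolding eq[symmetric] trace_det_diagc
    by (simp_all add: real_sym2_def trace_2_01 det_2_01 power2_eq_square)
  then show tr: "d 0 + d 1 = x + z" and det: "d 0 * d 1 = x * z - y\<^sup>2"
    by (simp_all only: of_real_eq_iff)
  have "(d 0 - d 1)\<^sup>2 = (d 0 + d 1)\<^sup>2 - 4 * (d 0 * d 1)"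
    by (simp add: power2_eq_square algebra_simps)
  also have "\<dots> = (x - z)\<^sup>2 + 4 * y\<^sup>2"
    unfolding tr det by (simp add: power2_eq_square algebra_simps)
  finally have "sqrt ((x - z)\<^sup>2 + 4 * y\<^sup>2) = d 0 - d 1"
    using sorted by (simp add: real_sqrt_unique)
  then show "d 0 = max_eig2 x y z"
    using tr unfolding max_eig2_def by simp
qed

lemma eigs_mat_rpow_real_sym2:
  assumes "0 < x" and "y\<^sup>2 < x * z" and "0 < t"
  shows "eigs (mat_rpow (real_sym2 x y z) t) 0 = max_eig2 x y z powr t"
proof -
  obtain U d where U: "unitary U" and sorted: "d 1 \<le> d 0"
    and eq: "real_sym2 x y z = U ** diagc d ** adjoint U"
    by (rule real_sym2_diagonalization)
  note eigenvalues = real_sym2_eigenvalues[OF U sorted eq]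
  have "0 < z"
  proof (rule ccontr)
    assume "\<not> 0 < z"
    then have "x * z \<le> 0"
      using assms(1) by (simp add: mult_nonneg_nonpos)
    with assms(2) show False
      using zero_le_power2[of y] by linarith
  qed
  then have "0 < d 0 + d 1" and "0 < d 0 * d 1"
    using assms(1,2) eigenvalues(1,2) by simp_all
  then have pos: "\<forall>i. 0 < d i"
    unfolding forall_2_01 by (auto simp: zero_less_mult_iff)
  have "mat_rpow (real_sym2 x y z) t = U ** diagc (\<lambda>i. d i powr t) ** adjoint U"
    unfolding eq by (rule mat_rpow_unitary_diag[OF U pos])
  moreover have "d 1 powr t \<le> d 0 powr t"
    using sorted pos assms(3) by (simp add: powr_mono2 less_imp_le)
  ultimately show ?thesis
    using eigs_unitary_diag[OF U] eigenvalues(3) by simp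
qed

section \<open>Nearly rank-one test matrices\<close>

definition rot_diag :: "real \<Rightarrow> real \<Rightarrow> real \<Rightarrow> complex^2^2" where
  "rot_diag c s \<epsilon> = rotation2 c s ** diagc (\<lambda>i. if i = 0 then 1 else \<epsilon>) ** adjoint (rotation2 c s)"

lemma rot_diag_eq_real_sym2:
  "rot_diag c s \<epsilon> = real_sym2 (c\<^sup>2 + s\<^sup>2 * \<epsilon>) (c * s * (1 - \<epsilon>)) (s\<^sup>2 + c\<^sup>2 * \<epsilon>)"
  by (simp add: rot_diag_def rotation2_def real_sym2_def diagc_eq_mk2 power2_eq_square algebra_simps)

lemma pos_def_rot_diag:
  assumes "c\<^sup>2 + s\<^sup>2 = 1" and "0 < \<epsilon>"
  shows "pos_def (rot_diag c s \<epsilon>)"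
  unfolding rot_diag_def using assms by (intro pos_def_unitary_diag unitary_rotation2) simp_all

lemma mat_rpow_rot_diag:
  assumes "c\<^sup>2 + s\<^sup>2 = 1" and "0 < \<epsilon>"
  shows "mat_rpow (rot_diag c s \<epsilon>) t = rot_diag c s (\<epsilon> powr t)"
proof -
  have "(\<lambda>i::2. (if i = 0 then 1 else \<epsilon>) powr t) = (\<lambda>i. if i = 0 then 1 else \<epsilon> powr t)"
    by (simp add: fun_eq_iff)
  then show ?thesis
    unfolding rot_diag_def using assms by (simp add: mat_rpow_unitary_diag unitary_rotation2)
qed

lemma eigs_R_mean_rot_diag_ge:
  assumes "0 < p" and "c\<^sup>2 + s\<^sup>2 = 1" and "0 < \<epsilon>"
  shows "(c\<^sup>2) powr (1 / p) \<le> eigs (R_mean \<alpha> p (rot_diag 1 0 \<epsilon>) (rot_diag c s \<epsilon>)) 0"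
proof -
  define u where "u = \<epsilon> powr ((1 - \<alpha>) / 2 * p)"
  define v where "v = \<epsilon> powr (\<alpha> * p)"
  have "0 < u" and "0 < v"
    using \<open>0 < \<epsilon>\<close> by (simp_all add: u_def v_def)
  define x where "x = c\<^sup>2 + s\<^sup>2 * v"
  define y where "y = u * (c * s * (1 - v))"
  define z where "z = u\<^sup>2 * (s\<^sup>2 + c\<^sup>2 * v)"
  have A: "mat_rpow (rot_diag 1 0 \<epsilon>) t = rot_diag 1 0 (\<epsilon> powr t)" for t
    by (rule mat_rpow_rot_diag) (simp_all add: \<open>0 < \<epsilon>\<close>)
  have X: "mat_rpow (rot_diag 1 0 \<epsilon>) ((1 - \<alpha>) / 2 * p) ** mat_rpow (rot_diag c s \<epsilon>) (\<alpha> * p)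
             ** mat_rpow (rot_diag 1 0 \<epsilon>) ((1 - \<alpha>) / 2 * p) = real_sym2 x y z"
    unfolding A mat_rpow_rot_diag[OF assms(2,3)] u_def[symmetric] v_def[symmetric]
    by (simp add: rot_diag_eq_real_sym2 real_sym2_def x_def y_def z_def power2_eq_square algebra_simps)
  have "0 < x"
    using \<open>0 < v\<close> assms(2) unfolding x_def by (cases "s = 0") (simp_all add: add_nonneg_pos)
  have "x * z - y\<^sup>2 = u\<^sup>2 * v * (c\<^sup>2 + s\<^sup>2)\<^sup>2"
    unfolding x_def y_def z_def by (simp add: power2_eq_square algebra_simps)
  moreover have "0 < u\<^sup>2 * v"
    using \<open>0 < u\<close> \<open>0 < v\<close> by simp
  ultimately have "y\<^sup>2 < x * z"
    using assms(2) by simp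
  with \<open>0 < x\<close> have "eigs (R_mean \<alpha> p (rot_diag 1 0 \<epsilon>) (rot_diag c s \<epsilon>)) 0 = max_eig2 x y z powr (1 / p)"
    unfolding R_mean_def X using \<open>0 < p\<close> by (simp add: eigs_mat_rpow_real_sym2)
  moreover have "c\<^sup>2 \<le> x"
    using \<open>0 < v\<close> unfolding x_def by simp
  ultimately show ?thesis
    using \<open>0 < p\<close> max_eig2_ge[of x y z] by (simp add: powr_mono2)
qed

lemma eigs_A_mean_rot_diag:
  assumes "0 < \<alpha>" and "\<alpha> < 1" and "0 < q" and "c\<^sup>2 + s\<^sup>2 = 1" and "0 < e"
  shows "eigs (A_mean \<alpha> q (rot_diag 1 0 (e powr (1 / q))) (rot_diag c s (e powr (1 / q)))) 0
           = max_eig2 (1 - \<alpha> + \<alpha> * (c\<^sup>2 + s\<^sup>2 * e)) (\<alpha> * (c * s * (1 - e)))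
               ((1 - \<alpha>) * e + \<alpha> * (s\<^sup>2 + c\<^sup>2 * e)) powr (1 / q)"
proof -
  define x where "x = 1 - \<alpha> + \<alpha> * (c\<^sup>2 + s\<^sup>2 * e)"
  define y where "y = \<alpha> * (c * s * (1 - e))"
  define z where "z = (1 - \<alpha>) * e + \<alpha> * (s\<^sup>2 + c\<^sup>2 * e)"
  have "(e powr (1 / q)) powr q = e"
    using \<open>0 < e\<close> \<open>0 < q\<close> by (simp add: powr_powr)
  then have A: "mat_rpow (rot_diag 1 0 (e powr (1 / q))) q = rot_diag 1 0 e"
    and B: "mat_rpow (rot_diag c s (e powr (1 / q))) q = rot_diag c s e"
    using assms(4,5) by (simp_all add: mat_rpow_rot_diag)
  have Y: "(1 - \<alpha>) *\<^sub>R rot_diag 1 0 e + \<alpha> *\<^sub>R rot_diag c s e = real_sym2 x y z"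
    by (simp add: rot_diag_eq_real_sym2 real_sym2_def x_def y_def z_def algebra_simps)
  have "0 < x"
    using assms unfolding x_def by (simp add: add_pos_nonneg)
  have "x * z - y\<^sup>2 = (1 - \<alpha>)\<^sup>2 * e + \<alpha> * (1 - \<alpha>) * ((s\<^sup>2 + c\<^sup>2 * e) + e * (c\<^sup>2 + s\<^sup>2 * e))
      + \<alpha>\<^sup>2 * e * (c\<^sup>2 + s\<^sup>2)\<^sup>2"
    unfolding x_def y_def z_def by (simp add: power2_eq_square algebra_simps)
  also have "\<dots> > 0"
    using assms by (intro add_pos_nonneg) simp_all
  finally have "y\<^sup>2 < x * z"
    by simp
  with \<open>0 < x\<close> \<open>0 < q\<close> show ?thesis
    unfolding A_mean_def A B Y x_def y_def z_def by (simp add: eigs_mat_rpow_real_sym2)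
qed

lemma le_lambda_imp_projection_bound:
  assumes "0 < \<alpha>" and "\<alpha> < 1" and "0 < p" and "0 < q"
    and hyp: "\<forall>A B :: complex^2^2. pos_def A \<and> pos_def B \<longrightarrow>
               le_lambda (R_mean \<alpha> p A B) (A_mean \<alpha> q A B)"
    and "c\<^sup>2 + s\<^sup>2 = 1"
  shows "(c\<^sup>2) powr (1 / p) \<le> max_eig2 (1 - \<alpha> + \<alpha> * c\<^sup>2) (\<alpha> * (c * s)) (\<alpha> * s\<^sup>2) powr (1 / q)"
proof -
  define f where "f e = max_eig2 (1 - \<alpha> + \<alpha> * (c\<^sup>2 + s\<^sup>2 * e)) (\<alpha> * (c * s * (1 - e)))
                          ((1 - \<alpha>) * e + \<alpha> * (s\<^sup>2 + c\<^sup>2 * e))" for e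
  have bound: "(c\<^sup>2) powr (1 / p) \<le> f e powr (1 / q)" if "0 < e" for e
  proof -
    define \<epsilon> where "\<epsilon> = e powr (1 / q)"
    have "0 < \<epsilon>"
      using \<open>0 < e\<close> by (simp add: \<epsilon>_def)
    then have "pos_def (rot_diag 1 0 \<epsilon>)" and "pos_def (rot_diag c s \<epsilon>)"
      using assms(6) by (simp_all add: pos_def_rot_diag)
    then have "eigs (R_mean \<alpha> p (rot_diag 1 0 \<epsilon>) (rot_diag c s \<epsilon>)) 0
                 \<le> eigs (A_mean \<alpha> q (rot_diag 1 0 \<epsilon>) (rot_diag c s \<epsilon>)) 0"
      using hyp unfolding le_lambda_def by blast
    then show ?thesis
      using eigs_R_mean_rot_diag_ge[OF \<open>0 < p\<close> assms(6) \<open>0 < \<epsilon>\<close>, of \<alpha>]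
        eigs_A_mean_rot_diag[OF assms(1,2,4,6) \<open>0 < e\<close>]
      unfolding f_def \<epsilon>_def by linarith
  qed
  have f0: "f 0 = max_eig2 (1 - \<alpha> + \<alpha> * c\<^sup>2) (\<alpha> * (c * s)) (\<alpha> * s\<^sup>2)"
    by (simp add: f_def)
  have "0 < 1 - \<alpha> + \<alpha> * c\<^sup>2"
    using assms(1,2) by (simp add: add_pos_nonneg)
  then have "0 < f 0"
    unfolding f0 using max_eig2_ge order.strict_trans2 by blast
  have "(f \<longlongrightarrow> f 0) (at_right 0)"
    unfolding f_def max_eig2_def by (intro tendsto_intros) simp_all
  then have "((\<lambda>e. f e powr (1 / q)) \<longlongrightarrow> f 0 powr (1 / q)) (at_right 0)"
    using \<open>0 < f 0\<close> by (intro tendsto_powr tendsto_const) simp_all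
  moreover have "\<forall>\<^sub>F e in at_right 0. (c\<^sup>2) powr (1 / p) \<le> f e powr (1 / q)"
    using eventually_at_right_less[of "0::real"] by (rule eventually_mono) (rule bound)
  ultimately have "(c\<^sup>2) powr (1 / p) \<le> f 0 powr (1 / q)"
    by (rule tendsto_lowerbound) simp
  then show ?thesis
    unfolding f0 .
qed

lemma max_eig2_projection_mean_le:
  fixes \<alpha> c s :: real
  assumes "c\<^sup>2 + s\<^sup>2 = 1" and "0 \<le> \<alpha>" and "\<alpha> \<le> 1"
  shows "max_eig2 (1 - \<alpha> + \<alpha> * c\<^sup>2) (\<alpha> * (c * s)) (\<alpha> * s\<^sup>2) \<le> 1 - \<alpha> * (1 - \<alpha>) * s\<^sup>2"
proof -
  have "\<alpha> * (1 - \<alpha>) \<le> 1 / 4"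
    using zero_le_power2[of "\<alpha> - 1 / 2"] by (simp add: power2_eq_square algebra_simps)
  moreover have "s\<^sup>2 \<le> 1"
    using assms(1) zero_le_power2[of c] by linarith
  ultimately have "\<alpha> * (1 - \<alpha>) * s\<^sup>2 \<le> 1 / 2"
    using assms(2,3) mult_mono[of "\<alpha> * (1 - \<alpha>)" "1 / 4" "s\<^sup>2" 1] by simp
  moreover have "(1 - \<alpha> + \<alpha> * c\<^sup>2) * (\<alpha> * s\<^sup>2) - (\<alpha> * (c * s))\<^sup>2 = \<alpha> * (1 - \<alpha>) * s\<^sup>2"
    by (simp add: power2_eq_square algebra_simps)
  moreover have "(1 - \<alpha> + \<alpha> * c\<^sup>2) + \<alpha> * s\<^sup>2 = 1"
    using assms(1) by (simp add: algebra_simps flip: distrib_left)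
  ultimately show ?thesis
    using max_eig2_trace_one_le[of "1 - \<alpha> + \<alpha> * c\<^sup>2" "\<alpha> * s\<^sup>2" "\<alpha> * (c * s)"] by simp
qed

section \<open>Slope comparison\<close>

lemma ln_ge_one_minus_inverse:
  fixes z :: real
  assumes "0 < z"
  shows "1 - 1 / z \<le> ln z"
  using ln_le_minus_one[of "1 / z"] assms by (simp add: ln_div)

lemma powr_one_minus_le_imp_mult_le:
  fixes k p q :: real
  assumes "0 < p" and "0 < q" and "0 \<le> k" and "k \<le> 1"
    and bound: "\<And>\<sigma>. 0 < \<sigma> \<Longrightarrow> \<sigma> < 1 \<Longrightarrow> (1 - \<sigma>) powr (1 / p) \<le> (1 - k * \<sigma>) powr (1 / q)"
  shows "k * p \<le> q"
proof (rule field_le_mult_one_interval)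
  fix z :: real
  assume "0 < z" and "z < 1"
  define \<sigma> where "\<sigma> = 1 - z"
  have "0 < \<sigma>" and "\<sigma> < 1"
    using \<open>0 < z\<close> \<open>z < 1\<close> by (simp_all add: \<sigma>_def)
  have "k * \<sigma> \<le> \<sigma>"
    using \<open>k \<le> 1\<close> \<open>0 < \<sigma>\<close> by (simp add: mult_left_le_one_le)
  with \<open>\<sigma> < 1\<close> have "k * \<sigma> < 1"
    by linarith
  have "- \<sigma> / z \<le> ln z"
    using ln_ge_one_minus_inverse[OF \<open>0 < z\<close>] \<open>0 < z\<close> by (simp add: \<sigma>_def field_simps)
  then have "- \<sigma> / z / p \<le> ln z / p"
    by (rule divide_right_mono) (use \<open>0 < p\<close> in simp)
  also have "ln z / p = ln ((1 - \<sigma>) powr (1 / p))"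
    using \<open>0 < z\<close> by (simp add: \<sigma>_def ln_powr)
  also have "\<dots> \<le> ln ((1 - k * \<sigma>) powr (1 / q))"
    using bound[OF \<open>0 < \<sigma>\<close> \<open>\<sigma> < 1\<close>] \<open>0 < \<sigma>\<close> \<open>\<sigma> < 1\<close> \<open>k * \<sigma> < 1\<close>
    by (subst ln_le_cancel_iff) simp_all
  also have "\<dots> = ln (1 - k * \<sigma>) / q"
    using \<open>k * \<sigma> < 1\<close> by (simp add: ln_powr)
  also have "\<dots> \<le> - (k * \<sigma>) / q"
    by (rule divide_right_mono)
      (use ln_le_minus_one[of "1 - k * \<sigma>"] \<open>k * \<sigma> < 1\<close> \<open>0 < q\<close> in simp_all)
  finally have "\<sigma> * (z * (k * p)) \<le> \<sigma> * q"
    using \<open>0 < z\<close> \<open>0 < p\<close> \<open>0 < q\<close> by (simp add: field_simps)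
  then show "z * (k * p) \<le> q"
    using \<open>0 < \<sigma>\<close> by simp
qed

theorem theorem4p10:
  fixes \<alpha> p q :: real
  assumes "0 < \<alpha>" and "\<alpha> < 1" and "0 < p" and "0 < q"
    and "\<forall>A B :: complex^2^2. pos_def A \<and> pos_def B \<longrightarrow>
           le_lambda (R_mean \<alpha> p A B) (A_mean \<alpha> q A B)"
  shows "\<alpha> * (1 - \<alpha>) * p \<le> q"
proof (rule powr_one_minus_le_imp_mult_le)
  fix \<sigma> :: real
  assume "0 < \<sigma>" and "\<sigma> < 1"
  define c where "c = sqrt (1 - \<sigma>)"
  define s where "s = sqrt \<sigma>"
  have c2: "c\<^sup>2 = 1 - \<sigma>" and s2: "s\<^sup>2 = \<sigma>" and cs: "c\<^sup>2 + s\<^sup>2 = 1"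
    using \<open>0 < \<sigma>\<close> \<open>\<sigma> < 1\<close> by (simp_all add: c_def s_def)
  define m where "m = max_eig2 (1 - \<alpha> + \<alpha> * c\<^sup>2) (\<alpha> * (c * s)) (\<alpha> * s\<^sup>2)"
  have "(1 - \<sigma>) powr (1 / p) \<le> m powr (1 / q)"
    using le_lambda_imp_projection_bound[OF assms cs] unfolding c2 m_def .
  also have "\<dots> \<le> (1 - \<alpha> * (1 - \<alpha>) * \<sigma>) powr (1 / q)"
  proof (rule powr_mono2)
    show "m \<le> 1 - \<alpha> * (1 - \<alpha>) * \<sigma>"
      using max_eig2_projection_mean_le[OF cs] assms(1,2) unfolding m_def s2 by simp
    have "0 \<le> 1 - \<alpha> + \<alpha> * c\<^sup>2"
      using assms(1,2) zero_le_power2[of c] by (simp add: add_nonneg_nonneg)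
    then show "0 \<le> m"
      unfolding m_def using max_eig2_ge order_trans by blast
  qed (use \<open>0 < q\<close> in simp)
  finally show "(1 - \<sigma>) powr (1 / p) \<le> (1 - \<alpha> * (1 - \<alpha>) * \<sigma>) powr (1 / q)" .
qed (use assms in \<open>simp_all add: mult_le_one\<close>)

end
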